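(* For any $\delta>0$ and $s\in\mathbb{N}$ there is $C>0$ such that for any $m,n$ with $n\ge s$ and any $\mathcal{F}\subset[m]^n$ with $\mu(\mathcal{F})\ge e^{-n/C}$, if $\mathbf{S}\in\binom{[n]}{s}$ and $\mathbf{x}\in[m]^{\mathbf{S}}$ are uniformly random, then $\Pr[\mu(\mathcal{F}_{\mathbf{S}\to\mathbf{x}})\ge(1-\delta)\mu(\mathcal{F})]\ge1-\delta$.
   Context: $\mu$ denotes the uniform probability measure on the relevant product space $[m]^I$. For $S\subset[n]$ and $x\in[m]^S$, $\mathcal{F}_{S\to x}=\{z\in[m]^{[n]\setminus S}:(z_S=x, z_{[n]\setminus S}=z)\in\mathcal{F}\}\subset[m]^{[n]\setminus S}$. *)

theory Defs
  imports "HOL-Analysis.Analysis"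
begin

definition cube :: "nat set \<Rightarrow> nat \<Rightarrow> (nat \<Rightarrow> nat) set" where
  "cube I m = PiE I (\<lambda>_. {..<m})"

definition mu :: "nat set \<Rightarrow> nat \<Rightarrow> (nat \<Rightarrow> nat) set \<Rightarrow> real" where
  "mu I m F = real (card F) / real (card (cube I m))"

definition restr :: "nat \<Rightarrow> nat \<Rightarrow> (nat \<Rightarrow> nat) set \<Rightarrow> nat set \<Rightarrow> (nat \<Rightarrow> nat) \<Rightarrow> (nat \<Rightarrow> nat) set" where
  "restr n m F S x = {z \<in> cube ({..<n} - S) m. (\<lambda>i. if i \<in> S then x i else z i) \<in> F}"

definition samples :: "nat \<Rightarrow> nat \<Rightarrow> nat \<Rightarrow> (nat set \<times> (nat \<Rightarrow> nat)) set" where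
  "samples n m s = {(S, x). S \<subseteq> {..<n} \<and> card S = s \<and> x \<in> cube S m}"

end

(* Let Y be uniform on F and write H(Y_T) for the entropy of its restriction to T.
   For fixed S the density of Y_S with respect to the uniform measure on [m]^S is
   q(x) = mu(F_{S->x}) / mu(F), and the bad restrictions are those with q(x) < 1 - delta.
   Since phi(t) = t ln t - t + 1 is nonnegative and decreasing on [0,1], a Markov argument
   bounds their proportion by D(Y_S || uniform) / phi(1 - delta), where the divergence is
   s ln m - H(Y_S).  Han's inequality, a consequence of the submodularity of T -> H(Y_T),
   says that H(Y_S) averaged over all s-sets S is at least (s/n) ln |F|; so the average
   divergence is at most (s/n) ln (1 / mu(F)) <= s / C, and C = (s+1) / (delta phi(1 - delta))
   works. *)

theory Submission
  imports Defs
begin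

definition fibre :: "('a \<Rightarrow> 'b) set \<Rightarrow> 'a set \<Rightarrow> ('a \<Rightarrow> 'b) \<Rightarrow> ('a \<Rightarrow> 'b) set" where
  "fibre F T y = {z \<in> F. \<forall>i\<in>T. z i = y i}"

text \<open>The entropy (in nats) of the restriction to \<open>T\<close> of a uniformly random element of \<open>F\<close>.\<close>
definition marginal_entropy :: "('a \<Rightarrow> 'b) set \<Rightarrow> 'a set \<Rightarrow> real" where
  "marginal_entropy F T = (\<Sum>y\<in>F. ln (card F / card (fibre F T y))) / card F"

lemma fibre_cong: "(\<And>i. i \<in> T \<Longrightarrow> y i = y' i) \<Longrightarrow> fibre F T y = fibre F T y'"
  unfolding fibre_def by auto

lemma finite_fibre: "finite F \<Longrightarrow> finite (fibre F T y)"
  unfolding fibre_def by simp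

lemma card_fibre_pos: "finite F \<Longrightarrow> y \<in> F \<Longrightarrow> 0 < card (fibre F T y)"
  unfolding fibre_def by (rule card_gt_0_iff[THEN iffD2]) auto

lemma sum_inverse_card_fibre:
  assumes "finite F" "y \<in> F"
  shows "(\<Sum>z\<in>fibre F T y. 1 / card (fibre F T z)) = 1"
proof -
  have "fibre F T z = fibre F T y" if "z \<in> fibre F T y" for z
    using that by (intro fibre_cong) (simp add: fibre_def)
  then have "(\<Sum>z\<in>fibre F T y. 1 / card (fibre F T z)) = card (fibre F T y) * (1 / card (fibre F T y))"
    by simp
  also have "\<dots> = 1"
    using card_fibre_pos[OF assms] by simp
  finally show ?thesis .
qed

lemma sum_fibre_swap:
  assumes "finite A" "finite F"
  shows "(\<Sum>y\<in>A. \<Sum>t\<in>fibre F T y. g y t) = (\<Sum>t\<in>F. \<Sum>y\<in>fibre A T t. g y t)"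
proof -
  have "fibre A T t = {y. y \<in> A \<and> (\<forall>i\<in>T. t i = y i)}" for t
    unfolding fibre_def by auto
  then show ?thesis
    unfolding fibre_def using sum.swap_restrict[OF assms] by simp
qed

lemma sum_inverse_card_fibre_pair_le:
  assumes fin: "finite F" and "t \<in> F"
  shows "(\<Sum>y\<in>fibre (fibre F P z) Q t. 1 / real (card (fibre F (P \<union> Q) y) * card (fibre F (P \<inter> Q) y)))
         \<le> (if t \<in> fibre F (P \<inter> Q) z then 1 / card (fibre F (P \<inter> Q) t) else 0)"
    (is "sum ?w ?Y \<le> _")
proof (cases "?Y = {}")
  case False
  then obtain y0 where y0: "y0 \<in> ?Y" by blast
  then have "y0 \<in> F"
    by (simp add: fibre_def)
  have Y: "?Y = fibre F (P \<union> Q) y0"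
    using y0 unfolding fibre_def by auto
  have t: "t \<in> fibre F (P \<inter> Q) z"
    using y0 \<open>t \<in> F\<close> unfolding fibre_def by auto
  have "fibre F (P \<inter> Q) y = fibre F (P \<inter> Q) t" if "y \<in> ?Y" for y
    using that by (intro fibre_cong) (auto simp: fibre_def)
  then have "sum ?w ?Y = (\<Sum>y\<in>fibre F (P \<union> Q) y0. 1 / card (fibre F (P \<union> Q) y)) / card (fibre F (P \<inter> Q) t)"
    unfolding Y sum_divide_distrib by (intro sum.cong) auto
  also have "\<dots> = 1 / card (fibre F (P \<inter> Q) t)"
    by (simp add: sum_inverse_card_fibre[OF fin \<open>y0 \<in> F\<close>])
  finally show ?thesis
    using t by simp
qed simp

text \<open>Double counting over triples \<open>(y, z, t)\<close> with \<open>z\<close> in the \<open>P\<close>-fibre and \<open>t\<close> in the \<open>Q\<close>-fibre of \<open>y\<close>.\<close>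
lemma sum_fibre_ratio_le:
  fixes P Q :: "'a set" and F :: "('a \<Rightarrow> 'b) set"
  assumes fin: "finite F"
  defines "w \<equiv> \<lambda>y. 1 / real (card (fibre F (P \<union> Q) y) * card (fibre F (P \<inter> Q) y))"
  shows "(\<Sum>y\<in>F. real (card (fibre F P y) * card (fibre F Q y)) * w y) \<le> card F"
proof -
  have "(\<Sum>y\<in>F. real (card (fibre F P y) * card (fibre F Q y)) * w y)
      = (\<Sum>y\<in>F. \<Sum>z\<in>fibre F P y. \<Sum>t\<in>fibre F Q y. w y)"
    by (simp add: mult.assoc)
  also have "\<dots> = (\<Sum>z\<in>F. \<Sum>y\<in>fibre F P z. \<Sum>t\<in>fibre F Q y. w y)"
    using fin by (intro sum_fibre_swap)
  also have "\<dots> = (\<Sum>z\<in>F. \<Sum>t\<in>F. \<Sum>y\<in>fibre (fibre F P z) Q t. w y)"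
    using fin by (intro sum.cong refl sum_fibre_swap finite_fibre)
  also have "\<dots> \<le> (\<Sum>z\<in>F. \<Sum>t\<in>F. if t \<in> fibre F (P \<inter> Q) z then 1 / card (fibre F (P \<inter> Q) t) else 0)"
    unfolding w_def using fin by (intro sum_mono sum_inverse_card_fibre_pair_le)
  also have "\<dots> = (\<Sum>z\<in>F. \<Sum>t\<in>fibre F (P \<inter> Q) z. 1 / card (fibre F (P \<inter> Q) t))"
    using fin by (simp add: sum.inter_filter[symmetric] fibre_def)
  also have "\<dots> = card F"
    using fin by (simp add: sum_inverse_card_fibre)
  finally show ?thesis .
qed

lemma marginal_entropy_submodular:
  assumes fin: "finite F"
  shows "marginal_entropy F (P \<union> Q) + marginal_entropy F (P \<inter> Q)
           \<le> marginal_entropy F P + marginal_entropy F Q"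
proof -
  let ?N = "real (card F)" and ?a = "\<lambda>T y. real (card (fibre F T y))"
  define r where "r y = real (card (fibre F P y) * card (fibre F Q y))
                        * (1 / real (card (fibre F (P \<union> Q) y) * card (fibre F (P \<inter> Q) y)))" for y
  have pos: "0 < ?a T y" if "y \<in> F" for T y
    using card_fibre_pos[OF fin that] by simp
  have "(\<Sum>y\<in>F. ln (?N / ?a (P \<union> Q) y) + ln (?N / ?a (P \<inter> Q) y) - ln (?N / ?a P y) - ln (?N / ?a Q y))
      = (\<Sum>y\<in>F. ln (r y))"
  proof (rule sum.cong[OF refl])
    fix y assume "y \<in> F"
    with fin have "0 < ?N"
      by (auto simp: card_gt_0_iff)
    with pos[of y] \<open>y \<in> F\<close> show "ln (?N / ?a (P \<union> Q) y) + ln (?N / ?a (P \<inter> Q) y) - ln (?N / ?a P y) - ln (?N / ?a Q y)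
        = ln (r y)"
      by (simp add: r_def ln_div ln_mult)
  qed
  also have "\<dots> \<le> (\<Sum>y\<in>F. r y - 1)"
    using pos by (intro sum_mono ln_le_minus_one) (simp add: r_def)
  also have "\<dots> \<le> 0"
    using sum_fibre_ratio_le[OF fin, of P Q] by (simp add: sum_subtractf r_def)
  finally show ?thesis
    unfolding marginal_entropy_def sum_subtractf sum.distrib add_divide_distrib[symmetric]
    by (simp add: divide_right_mono)
qed

lemma marginal_entropy_empty: "marginal_entropy F {} = 0"
  by (simp add: marginal_entropy_def fibre_def)

lemma marginal_entropy_total:
  assumes "finite F" "F \<subseteq> extensional I"
  shows "marginal_entropy F I = ln (card F)"
proof -
  have "fibre F I y = {y}" if "y \<in> F" for y
    using that assms(2) unfolding fibre_def by (auto intro: extensionalityI)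
  then have "marginal_entropy F I = card F * ln (card F) / card F"
    by (simp add: marginal_entropy_def)
  then show ?thesis
    by (cases "card F = 0") simp_all
qed

lemma submodular_sum_increments_le:
  fixes f :: "nat set \<Rightarrow> real"
  assumes submod: "\<And>P Q. P \<subseteq> {..<n} \<Longrightarrow> Q \<subseteq> {..<n} \<Longrightarrow> f (P \<union> Q) + f (P \<inter> Q) \<le> f P + f Q"
    and "S \<subseteq> {..<n}"
  shows "(\<Sum>j\<in>S. f {..<Suc j} - f {..<j}) \<le> f S - f {}"
proof -
  have "finite S"
    using assms(2) finite_subset by blast
  then show ?thesis
    using assms(2)
  proof (induction S rule: finite_linorder_max_induct)
    case (insert b A)
    have "f (insert b A \<union> {..<b}) + f (insert b A \<inter> {..<b}) \<le> f (insert b A) + f {..<b}"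
      using insert.prems by (intro submod) auto
    moreover have "insert b A \<union> {..<b} = {..<Suc b}" "insert b A \<inter> {..<b} = A" "b \<notin> A"
      using insert.hyps(2) by auto
    ultimately show ?case
      using insert by simp
  qed simp
qed

lemma card_subsets_containing:
  assumes "finite A" "j \<in> A"
  shows "card {S. S \<subseteq> A \<and> card S = s \<and> j \<in> S} + (card A - 1 choose s) = card A choose s"
proof -
  have "card A choose s = card {S. S \<subseteq> A \<and> card S = s}"
    using assms by (simp add: n_subsets)
  also have "{S. S \<subseteq> A \<and> card S = s} = {S. S \<subseteq> A \<and> card S = s \<and> j \<in> S} \<union> {S. S \<subseteq> A - {j} \<and> card S = s}"
    by auto
  also have "card \<dots> = card {S. S \<subseteq> A \<and> card S = s \<and> j \<in> S} + card {S. S \<subseteq> A - {j} \<and> card S = s}"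
    using assms by (intro card_Un_disjoint) auto
  also have "card {S. S \<subseteq> A - {j} \<and> card S = s} = card A - 1 choose s"
    using assms by (simp add: n_subsets)
  finally show ?thesis ..
qed

theorem han_inequality:
  fixes f :: "nat set \<Rightarrow> real"
  assumes submod: "\<And>P Q. P \<subseteq> {..<n} \<Longrightarrow> Q \<subseteq> {..<n} \<Longrightarrow> f (P \<union> Q) + f (P \<inter> Q) \<le> f P + f Q"
  shows "real (n - 1 choose s) * f {} + (real (n choose s) - real (n - 1 choose s)) * f {..<n}
           \<le> (\<Sum>S | S \<subseteq> {..<n} \<and> card S = s. f S)"
proof -
  define Sets where "Sets = {S. S \<subseteq> {..<n} \<and> card S = s}"
  have fin: "finite Sets"
    unfolding Sets_def by simp
  have card_Sets: "card Sets = n choose s"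
    unfolding Sets_def by (simp add: n_subsets)
  have count: "real (card {S \<in> Sets. j \<in> S}) = real (n choose s) - real (n - 1 choose s)" if "j < n" for j
    using card_subsets_containing[of "{..<n}" j s] that unfolding Sets_def
    by (simp flip: of_nat_add)
  have "(real (n choose s) - real (n - 1 choose s)) * (f {..<n} - f {})
      = (real (n choose s) - real (n - 1 choose s)) * (\<Sum>j<n. f {..<Suc j} - f {..<j})"
    by (simp add: sum_lessThan_telescope[of "\<lambda>j. f {..<j}"])
  also have "\<dots> = (\<Sum>j<n. real (card {S \<in> Sets. j \<in> S}) * (f {..<Suc j} - f {..<j}))"
    by (simp add: count sum_distrib_left)
  also have "\<dots> = (\<Sum>j<n. \<Sum>S\<in>{S \<in> Sets. j \<in> S}. f {..<Suc j} - f {..<j})"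
    by simp
  also have "\<dots> = (\<Sum>S\<in>Sets. \<Sum>j\<in>{j \<in> {..<n}. j \<in> S}. f {..<Suc j} - f {..<j})"
    by (rule sum.swap_restrict[OF finite_lessThan fin])
  also have "\<dots> = (\<Sum>S\<in>Sets. \<Sum>j\<in>S. f {..<Suc j} - f {..<j})"
    unfolding Sets_def by (intro sum.cong refl arg_cong2[where f = sum]) auto
  also have "\<dots> \<le> (\<Sum>S\<in>Sets. f S - f {})"
    unfolding Sets_def by (intro sum_mono submodular_sum_increments_le[OF submod]) auto
  finally show ?thesis
    unfolding Sets_def[symmetric] using card_Sets by (simp add: sum_subtractf algebra_simps)
qed

definition kl_phi :: "real \<Rightarrow> real" where
  "kl_phi t = t * ln t - t + 1"

lemma kl_phi_nonneg:
  assumes "0 \<le> t"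
  shows "0 \<le> kl_phi t"
proof (cases "t = 0")
  case False
  with assms have "- ln t \<le> 1 / t - 1"
    using ln_le_minus_one[of "1 / t"] by (simp add: ln_div)
  then have "t * (- ln t) \<le> t * (1 / t - 1)"
    using assms by (intro mult_left_mono) auto
  with False show ?thesis
    by (simp add: kl_phi_def algebra_simps)
qed (simp add: kl_phi_def)

lemma kl_phi_antimono:
  assumes "0 \<le> q" "q \<le> p" "p \<le> 1"
  shows "kl_phi p \<le> kl_phi q"
proof (cases "q = 0")
  case True
  have "ln p \<le> 0"
    using assms by (cases "p = 0") simp_all
  then have "p * ln p \<le> 0"
    using assms by (simp add: mult_nonneg_nonpos)
  with True assms show ?thesis
    by (simp add: kl_phi_def)
next
  case False
  with assms have q: "0 < q" by simp
  have "ln p - ln q \<le> (p - q) / q"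
    using assms q by (intro ln_diff_le) auto
  then have "q * (ln p - ln q) \<le> p - q"
    using q by (simp add: field_simps)
  moreover have "(p - q) * ln p \<le> 0"
    using assms q by (intro mult_nonneg_nonpos) simp_all
  ultimately show ?thesis
    by (simp add: kl_phi_def algebra_simps)
qed

lemma kl_phi_pos:
  assumes "0 < p" "p < 1"
  shows "0 < kl_phi p"
proof -
  have "ln 1 - ln p < (1 - p) / p"
    using assms by (intro ln_diff_less) auto
  then have "- ln p * p < 1 - p"
    using assms by (simp add: field_simps)
  then show ?thesis
    by (simp add: kl_phi_def algebra_simps)
qed

lemma kl_phi_markov:
  assumes "finite X" "\<And>x. x \<in> X \<Longrightarrow> 0 \<le> q x" "p \<le> 1"
  shows "kl_phi p * card {x \<in> X. q x < p} \<le> (\<Sum>x\<in>X. kl_phi (q x))"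
proof -
  have "kl_phi p * card {x \<in> X. q x < p} = (\<Sum>x | x \<in> X \<and> q x < p. kl_phi p)"
    by simp
  also have "\<dots> \<le> (\<Sum>x | x \<in> X \<and> q x < p. kl_phi (q x))"
    using assms by (intro sum_mono kl_phi_antimono) auto
  also have "\<dots> \<le> (\<Sum>x\<in>X. kl_phi (q x))"
    using assms by (intro sum_mono2 kl_phi_nonneg) auto
  finally show ?thesis .
qed

lemma sum_card_fibre_mult:
  assumes "F \<subseteq> PiE I A" "S \<subseteq> I" "finite F" "finite (PiE S A)"
  shows "(\<Sum>x\<in>PiE S A. of_nat (card (fibre F S x)) * g x) = (\<Sum>y\<in>F. g (restrict y S))"
proof -
  have fibre_eq: "{y \<in> F. restrict y S = x} = fibre F S x" if "x \<in> PiE S A" for x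
  proof -
    have "restrict y S = x \<longleftrightarrow> (\<forall>i\<in>S. y i = x i)" for y
      using that by (auto simp: fun_eq_iff PiE_def extensional_def)
    then show ?thesis
      unfolding fibre_def by simp
  qed
  have "(\<Sum>y\<in>F. g (restrict y S)) = (\<Sum>x\<in>PiE S A. \<Sum>y | y \<in> F \<and> restrict y S = x. g (restrict y S))"
    using assms by (intro sum.group[symmetric]) (auto simp: PiE_iff subset_iff)
  also have "\<dots> = (\<Sum>x\<in>PiE S A. of_nat (card (fibre F S x)) * g x)"
    by (intro sum.cong refl) (simp flip: fibre_eq)
  finally show ?thesis ..
qed

lemma sum_kl_phi_fibres:
  assumes F: "F \<subseteq> PiE I A" "finite F" "F \<noteq> {}" and S: "S \<subseteq> I" "finite (PiE S A)"
  defines "M \<equiv> real (card (PiE S A))"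
  shows "(\<Sum>x\<in>PiE S A. kl_phi (real (card (fibre F S x)) * M / card F)) = M * (ln M - marginal_entropy F S)"
proof -
  let ?N = "real (card F)" and ?a = "\<lambda>x. real (card (fibre F S x))"
  define g where "g x = M / ?N * (ln (?a x * M / ?N) - 1)" for x
  have N: "0 < ?N"
    using F by (simp add: card_gt_0_iff)
  obtain y0 where "y0 \<in> F"
    using F by blast
  then have "restrict y0 S \<in> PiE S A"
    using F S by (auto simp: PiE_iff subset_iff)
  then have "PiE S A \<noteq> {}"
    by blast
  then have M: "0 < M"
    using S(2) by (simp add: M_def card_gt_0_iff)
  have "(\<Sum>x\<in>PiE S A. kl_phi (?a x * M / ?N)) = (\<Sum>x\<in>PiE S A. ?a x * g x + 1)"
    by (intro sum.cong refl) (simp add: kl_phi_def g_def algebra_simps)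
  also have "\<dots> = (\<Sum>y\<in>F. g (restrict y S)) + M"
    by (simp add: sum.distrib sum_card_fibre_mult[OF F(1) S(1) F(2) S(2)] M_def)
  also have "(\<Sum>y\<in>F. g (restrict y S)) = M / ?N * (\<Sum>y\<in>F. ln M - ln (?N / ?a y) - 1)"
  proof -
    have "g (restrict y S) = M / ?N * (ln M - ln (?N / ?a y) - 1)" if "y \<in> F" for y
    proof -
      have "fibre F S (restrict y S) = fibre F S y"
        by (intro fibre_cong) simp
      moreover have "0 < ?a y"
        using card_fibre_pos[OF F(2) that] by simp
      ultimately show ?thesis
        using M N by (simp add: g_def ln_mult ln_div)
    qed
    then show ?thesis
      by (simp add: sum_distrib_left)
  qed
  also have "\<dots> = M * ln M - M * marginal_entropy F S - M"
    using N by (simp add: marginal_entropy_def sum_subtractf sum.distrib field_simps)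
  finally show ?thesis
    by (simp add: algebra_simps)
qed

lemma card_light_fibres_le:
  assumes F: "F \<subseteq> PiE I A" "finite F" "F \<noteq> {}" and S: "S \<subseteq> I" "finite (PiE S A)"
    and "p \<le> 1"
  defines "M \<equiv> real (card (PiE S A))"
  shows "kl_phi p * card {x \<in> PiE S A. real (card (fibre F S x)) * M < p * card F}
           \<le> M * (ln M - marginal_entropy F S)"
proof -
  let ?q = "\<lambda>x. real (card (fibre F S x)) * M / card F"
  have "0 < card F"
    using F by (simp add: card_gt_0_iff)
  then have "{x \<in> PiE S A. real (card (fibre F S x)) * M < p * card F} = {x \<in> PiE S A. ?q x < p}"
    by (simp add: pos_divide_less_eq)
  then have "kl_phi p * card {x \<in> PiE S A. real (card (fibre F S x)) * M < p * card F}
      = kl_phi p * card {x \<in> PiE S A. ?q x < p}"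
    by simp
  also have "\<dots> \<le> (\<Sum>x\<in>PiE S A. kl_phi (?q x))"
    using S(2) \<open>p \<le> 1\<close> unfolding M_def by (intro kl_phi_markov) auto
  also have "\<dots> = M * (ln M - marginal_entropy F S)"
    unfolding M_def by (rule sum_kl_phi_fibres[OF F S])
  finally show ?thesis .
qed

lemma finite_cube: "finite T \<Longrightarrow> finite (cube T m)"
  unfolding cube_def by (simp add: finite_PiE)

lemma card_cube: "finite T \<Longrightarrow> card (cube T m) = m ^ card T"
  unfolding cube_def by (simp add: card_PiE)

lemma card_restr:
  assumes "S \<subseteq> {..<n}" "F \<subseteq> cube {..<n} m"
  shows "card (restr n m F S x) = card (fibre F S x)"
proof (rule bij_betw_same_card)
  let ?glue = "\<lambda>z i. if i \<in> S then x i else z i" and ?cut = "\<lambda>y. restrict y ({..<n} - S)"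
  have glue_cut: "?glue (?cut y) = y" if "y \<in> fibre F S x" for y
  proof -
    have y: "y \<in> F" "\<forall>i\<in>S. y i = x i"
      using that by (auto simp: fibre_def)
    then have "y \<in> extensional {..<n}"
      using assms(2) by (auto simp: cube_def PiE_def)
    with y show ?thesis
      by (auto simp: fun_eq_iff extensional_def)
  qed
  show "bij_betw ?glue (restr n m F S x) (fibre F S x)"
  proof (rule bij_betwI[where g = ?cut])
    show "?glue \<in> restr n m F S x \<rightarrow> fibre F S x"
      unfolding restr_def fibre_def by auto
    show "?cut \<in> fibre F S x \<rightarrow> restr n m F S x"
      using glue_cut assms(2) unfolding restr_def cube_def by (auto simp: fibre_def PiE_iff)
    show "?cut (?glue z) = z" if "z \<in> restr n m F S x" for z
      using that unfolding restr_def cube_def by (auto simp: PiE_iff extensional_def)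
    show "?glue (?cut y) = y" if "y \<in> fibre F S x" for y
      using that by (rule glue_cut)
  qed
qed

lemma card_cube_split:
  assumes "S \<subseteq> {..<n}"
  shows "card (cube {..<n} m) = card (cube S m) * card (cube ({..<n} - S) m)"
proof -
  have "card S \<le> n"
    using card_mono[OF finite_lessThan assms] by simp
  moreover have "finite S"
    using assms finite_subset by blast
  ultimately show ?thesis
    using assms by (simp add: card_cube card_Diff_subset flip: power_add)
qed

lemma mu_restr_ge_iff:
  assumes S: "S \<subseteq> {..<n}" and F: "F \<subseteq> cube {..<n} m" "F \<noteq> {}"
  shows "p * mu {..<n} m F \<le> mu ({..<n} - S) m (restr n m F S x)
           \<longleftrightarrow> p * card F \<le> real (card (fibre F S x)) * m ^ card S"
proof -
  let ?M = "real (card (cube S m))" and ?K = "real (card (cube ({..<n} - S) m))"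
  have "0 < card (cube {..<n} m)"
    using F finite_cube[of "{..<n}" m] by (auto simp: card_gt_0_iff)
  then have pos: "0 < ?M" "0 < ?K"
    unfolding card_cube_split[OF S] by simp_all
  have "p * mu {..<n} m F \<le> mu ({..<n} - S) m (restr n m F S x)
      \<longleftrightarrow> p * card F / (?M * ?K) \<le> card (fibre F S x) / ?K"
    unfolding mu_def card_cube_split[OF S] card_restr[OF S F(1)] by simp
  also have "\<dots> \<longleftrightarrow> p * card F \<le> card (fibre F S x) * ?M"
    using pos by (simp add: field_simps)
  also have "?M = m ^ card S"
    using finite_subset[OF S finite_lessThan] by (simp add: card_cube)
  finally show ?thesis .
qed

lemma han_marginal_entropy_cube:
  assumes "F \<subseteq> cube {..<n} m"
  shows "(real (n choose s) - real (n - 1 choose s)) * ln (card F)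
           \<le> (\<Sum>S | S \<subseteq> {..<n} \<and> card S = s. marginal_entropy F S)"
proof -
  have fin: "finite F"
    using assms finite_cube[of "{..<n}" m] finite_subset by blast
  have "F \<subseteq> extensional {..<n}"
    using assms by (auto simp: cube_def PiE_def)
  then show ?thesis
    using han_inequality[of n "marginal_entropy F" s] marginal_entropy_submodular[OF fin]
    by (simp add: marginal_entropy_empty marginal_entropy_total[OF fin])
qed

lemma binomial_diff_pred:
  assumes "s \<le> n"
  shows "real (n choose s) - real (n - 1 choose s) = real s / real n * real (n choose s)"
proof (cases "n = 0")
  case False
  have "real n * real (n - 1 choose s) = (real n - real s) * real (n choose s)"
    using binomial_absorb_comp[of n s] assms by (simp flip: of_nat_mult of_nat_diff)
  with False show ?thesis
    by (simp add: field_simps)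
qed (use assms in simp)

lemma ln_card_ge_of_mu_ge:
  assumes "exp (- real n / C) \<le> mu {..<n} m F"
  shows "real n * ln m - real n / C \<le> ln (card F)"
proof -
  have mu: "0 < mu {..<n} m F"
    using assms exp_gt_zero order_less_le_trans by blast
  then have "0 < card F" "0 < m ^ n"
    by (auto simp: mu_def card_cube zero_less_divide_iff)
  then have "ln (mu {..<n} m F) = ln (card F) - real n * ln m"
    by (simp add: mu_def card_cube ln_div ln_realpow)
  moreover have "- real n / C \<le> ln (mu {..<n} m F)"
    using assms mu by (simp add: ln_ge_iff)
  ultimately show ?thesis
    by simp
qed

lemma samples_eq_Sigma: "samples n m s = Sigma {S. S \<subseteq> {..<n} \<and> card S = s} (\<lambda>S. cube S m)"
  unfolding samples_def by auto

lemma finite_samples: "finite (samples n m s)"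
  unfolding samples_eq_Sigma
proof (rule finite_SigmaI)
  show "finite {S. S \<subseteq> {..<n} \<and> card S = s}"
    by simp
  show "finite (cube S m)" if "S \<in> {S. S \<subseteq> {..<n} \<and> card S = s}" for S
    using that finite_subset by (auto intro: finite_cube)
qed

lemma card_samples: "card (samples n m s) = (n choose s) * m ^ s"
proof -
  have "finite S" if "S \<subseteq> {..<n}" for S
    using that finite_subset by blast
  then show ?thesis
    unfolding samples_eq_Sigma by (simp add: finite_cube card_cube n_subsets)
qed

lemma card_samples_filter:
  "card {(S, x) \<in> samples n m s. P S x} = (\<Sum>S | S \<subseteq> {..<n} \<and> card S = s. card {x \<in> cube S m. P S x})"
proof -
  have "{(S, x) \<in> samples n m s. P S x}
      = Sigma {S. S \<subseteq> {..<n} \<and> card S = s} (\<lambda>S. {x \<in> cube S m. P S x})"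
    unfolding samples_def by auto
  moreover have "finite {x \<in> cube S m. P S x}" if "S \<subseteq> {..<n}" for S
    using finite_subset[OF that] by (simp add: finite_cube)
  ultimately show ?thesis
    by simp
qed

lemma kl_phi_card_light_samples_le:
  fixes p C :: real
  assumes "s \<le> n" and F: "F \<subseteq> cube {..<n} m" "F \<noteq> {}" and "p \<le> 1" "0 < C"
    and mu: "exp (- real n / C) \<le> mu {..<n} m F"
  shows "kl_phi p * card {(S, x) \<in> samples n m s. real (card (fibre F S x)) * real m ^ s < p * card F}
           \<le> card (samples n m s) * s / C"
proof -
  define Sets where "Sets = {S. S \<subseteq> {..<n} \<and> card S = s}"
  define light where "light S = {x \<in> cube S m. real (card (fibre F S x)) * real m ^ s < p * card F}" for S
  let ?B = "real (n choose s)" and ?M = "real m ^ s" and ?N = "real (card F)"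
  have "kl_phi p * card {(S, x) \<in> samples n m s. real (card (fibre F S x)) * real m ^ s < p * card F}
      = (\<Sum>S\<in>Sets. kl_phi p * card (light S))"
    unfolding card_samples_filter Sets_def light_def by (simp add: sum_distrib_left)
  also have "\<dots> \<le> (\<Sum>S\<in>Sets. ?M * (ln ?M - marginal_entropy F S))"
  proof (rule sum_mono)
    fix S assume "S \<in> Sets"
    then have S: "S \<subseteq> {..<n}" "finite S" "card S = s"
      using finite_subset by (auto simp: Sets_def)
    have "finite F"
      using F(1) finite_cube[of "{..<n}" m] finite_subset by blast
    moreover have "finite (cube S m)" "card (cube S m) = m ^ s"
      using S by (simp_all add: finite_cube card_cube)
    ultimately show "kl_phi p * card (light S) \<le> ?M * (ln ?M - marginal_entropy F S)"
      using card_light_fibres_le[of F "{..<n}" "\<lambda>_. {..<m}" S p] F S \<open>p \<le> 1\<close>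
      by (simp add: light_def cube_def)
  qed
  also have "\<dots> = ?M * (?B * s * ln m - (\<Sum>S\<in>Sets. marginal_entropy F S))"
    by (simp add: Sets_def n_subsets sum_subtractf sum_distrib_left ln_realpow algebra_simps)
  also have "\<dots> \<le> ?M * (?B * s * ln m - s / n * ?B * (n * ln m - n / C))"
  proof -
    have "s / n * ?B * (n * ln m - n / C) \<le> s / n * ?B * ln ?N"
      using ln_card_ge_of_mu_ge[OF mu] by (intro mult_left_mono) simp_all
    also have "\<dots> \<le> (\<Sum>S\<in>Sets. marginal_entropy F S)"
      using han_marginal_entropy_cube[OF F(1), of s] binomial_diff_pred[OF \<open>s \<le> n\<close>]
      by (simp add: Sets_def)
    finally show ?thesis
      by (intro mult_left_mono) simp_all
  qed
  also have "\<dots> = card (samples n m s) * s / C"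
    using \<open>s \<le> n\<close> by (cases "n = 0") (simp_all add: card_samples field_simps)
  finally show ?thesis
    by simp
qed

lemma card_dense_restrictions:
  assumes F: "F \<subseteq> cube {..<n} m" "F \<noteq> {}"
  shows "real (card {(S, x) \<in> samples n m s. mu ({..<n} - S) m (restr n m F S x) \<ge> p * mu {..<n} m F})
           = real (card (samples n m s))
             - real (card {(S, x) \<in> samples n m s. real (card (fibre F S x)) * real m ^ s < p * card F})"
proof -
  let ?light = "{(S, x) \<in> samples n m s. real (card (fibre F S x)) * real m ^ s < p * card F}"
  have "{(S, x) \<in> samples n m s. mu ({..<n} - S) m (restr n m F S x) \<ge> p * mu {..<n} m F}
      = samples n m s - ?light"
    using mu_restr_ge_iff[OF _ F] by (auto simp: samples_def not_less)
  moreover have "?light \<subseteq> samples n m s"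
    by auto
  moreover from this have "finite ?light"
    using finite_samples by (rule finite_subset)
  ultimately show ?thesis
    using card_mono[OF finite_samples] by (simp add: card_Diff_subset)
qed

lemma prob_dense_restriction_ge:
  fixes \<delta> C :: real
  assumes "0 < \<delta>" "\<delta> < 1" "s \<le> n" and F: "F \<subseteq> cube {..<n} m"
    and C: "C = (s + 1) / (\<delta> * kl_phi (1 - \<delta>))"
    and mu: "exp (- real n / C) \<le> mu {..<n} m F"
  shows "1 - \<delta> \<le> real (card {(S, x) \<in> samples n m s.
                   mu ({..<n} - S) m (restr n m F S x) \<ge> (1 - \<delta>) * mu {..<n} m F})
                 / real (card (samples n m s))"
proof -
  let ?light = "{(S, x) \<in> samples n m s. real (card (fibre F S x)) * real m ^ s < (1 - \<delta>) * card F}"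
  have "0 < mu {..<n} m F"
    using mu exp_gt_zero order_less_le_trans by blast
  then have "F \<noteq> {}" "0 < m ^ n"
    by (auto simp: mu_def card_cube zero_less_divide_iff)
  then have samples: "0 < card (samples n m s)"
    using \<open>s \<le> n\<close> by (auto simp: card_samples)
  have kl: "0 < kl_phi (1 - \<delta>)"
    using assms by (intro kl_phi_pos) auto
  then have "0 < C"
    using C \<open>0 < \<delta>\<close> by simp
  have "kl_phi (1 - \<delta>) * card ?light \<le> card (samples n m s) * s / C"
    using assms \<open>F \<noteq> {}\<close> \<open>0 < C\<close> by (intro kl_phi_card_light_samples_le) auto
  also have "\<dots> = kl_phi (1 - \<delta>) * (\<delta> * card (samples n m s) * (s / (s + 1)))"
    using C kl by (simp add: field_simps)
  finally have "card ?light \<le> \<delta> * card (samples n m s) * (s / (s + 1))"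
    using mult_le_cancel_left_pos[OF kl] by blast
  also have "\<dots> \<le> \<delta> * card (samples n m s)"
    using \<open>0 < \<delta>\<close> by (intro mult_left_le) simp_all
  finally have "card ?light \<le> \<delta> * card (samples n m s)" .
  moreover have "1 - \<delta> \<le> (a - l) / a" if "0 < a" "l \<le> \<delta> * a" for a l :: real
    using that by (simp add: field_simps)
  ultimately show ?thesis
    using samples by (simp add: card_dense_restrictions[OF F \<open>F \<noteq> {}\<close>])
qed

theorem proposition6p1:
  shows "\<forall>\<delta>::real. \<delta> > 0 \<longrightarrow> (\<forall>s::nat. \<exists>C::real. C > 0 \<and>
    (\<forall>(m::nat) (n::nat) (F::(nat \<Rightarrow> nat) set).
       n \<ge> s \<longrightarrow> F \<subseteq> cube {..<n} m \<longrightarrow> mu {..<n} m F \<ge> exp (- real n / C) \<longrightarrow>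
       real (card {(S, x) \<in> samples n m s.
                 mu ({..<n} - S) m (restr n m F S x) \<ge> (1 - \<delta>) * mu {..<n} m F})
         / real (card (samples n m s)) \<ge> 1 - \<delta>))"
  apply (intro allI impI)
  subgoal premises \<delta> for \<delta> s
  proof (cases "\<delta> < 1")
    case True
    define C where "C = (real s + 1) / (\<delta> * kl_phi (1 - \<delta>))"
    have "0 < C"
      using kl_phi_pos[of "1 - \<delta>"] \<delta> True by (simp add: C_def)
    with prob_dense_restriction_ge[OF \<delta> True _ _ C_def] show ?thesis
      by blast
  next
    case False
    then show ?thesis
      by (intro exI[of _ 1]) (simp add: order_trans[OF _ divide_nonneg_nonneg])
  qed
  done

end
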